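(* Assume the standing hypotheses (H). Let $A$ be a part of $G$ with $|A|=3$, and let $L_A$ be the set of colors $c$ such that $c\in L(u)\cap L(v)$ for some good pair $\{u,v\}$ for $A$. Then $|L_A|\ge k_3+\frac{k_1+k_4}{3}$.
   Context: A list assignment $L$ assigns to each vertex $v$ a set $L(v)$ of colors; an $L$-coloring is a proper coloring $f$ with $f(v)\in L(v)$ for all $v$; $\mathrm{ch}$ denotes choice number and $\chi$ chromatic number. A part of a complete multipartite graph is one of its maximal stable sets. Standing hypotheses (H): $k\ge1$ and $n\ge 2k+2$ are integers; $G$ is a complete $k$-partite graph (exactly $k$ nonempty parts) on $n$ vertices; $L$ is a list assignment for $G$ with $|L(v)|\ge\lceil (n+k-1)/3\rceil$ for every vertex $v$; $G$ has no $L$-coloring; $\left|\bigcup_{v\in V(G)}L(v)\right|\le n-1$; and every graph $H$ with fewer than $n$ vertices satisfies $\mathrm{ch}(H)\le\max\{\chi(H),\lceil(|V(H)|+\chi(H)-1)/3\rceil\}$. For $i\in\{1,2,3,4\}$, $k_i$ denotes the number of parts of $G$ of size $i$. For a part $A$ with $|A|\ge3$, a pair $\{u,v\}\subseteq A$ of distinct vertices is a good pair for $A$ if either $|A|=3$ and $|L(u)\cap L(v)|\ge\frac{k_1+k_4+1}{3}$, or $|A|=4$ and $|L(u)\cap L(v)|\ge|L(w)\cap L(z)|$ where $\{w,z\}=A\setminus\{u,v\}$. *)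

theory Defs
  imports Complex_Main "HOL-Library.Disjoint_Sets"
begin

definition graph :: "'v set \<Rightarrow> ('v \<Rightarrow> 'v \<Rightarrow> bool) \<Rightarrow> bool" where
  "graph V E \<longleftrightarrow> finite V \<and> (\<forall>u v. E u v \<longrightarrow> u \<in> V \<and> v \<in> V \<and> u \<noteq> v \<and> E v u)"

definition proper_coloring :: "'v set \<Rightarrow> ('v \<Rightarrow> 'v \<Rightarrow> bool) \<Rightarrow> ('v \<Rightarrow> 'c) \<Rightarrow> bool" where
  "proper_coloring V E f \<longleftrightarrow> (\<forall>u\<in>V. \<forall>v\<in>V. E u v \<longrightarrow> f u \<noteq> f v)"

definition L_coloring :: "'v set \<Rightarrow> ('v \<Rightarrow> 'v \<Rightarrow> bool) \<Rightarrow> ('v \<Rightarrow> 'c set) \<Rightarrow> ('v \<Rightarrow> 'c) \<Rightarrow> bool" where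
  "L_coloring V E L f \<longleftrightarrow> proper_coloring V E f \<and> (\<forall>v\<in>V. f v \<in> L v)"

definition chi :: "'v set \<Rightarrow> ('v \<Rightarrow> 'v \<Rightarrow> bool) \<Rightarrow> nat" where
  "chi V E = (LEAST k. \<exists>f :: 'v \<Rightarrow> nat. proper_coloring V E f \<and> f ` V \<subseteq> {..<k})"

(* k-choosability: every assignment of (finite) lists of size at least k admits an L-coloring.
   Colors are taken from nat (countably many colors suffice for finite graphs). *)
definition choosable :: "'v set \<Rightarrow> ('v \<Rightarrow> 'v \<Rightarrow> bool) \<Rightarrow> nat \<Rightarrow> bool" where
  "choosable V E k \<longleftrightarrow>
     (\<forall>L :: 'v \<Rightarrow> nat set. (\<forall>v\<in>V. finite (L v) \<and> card (L v) \<ge> k) \<longrightarrow> (\<exists>f. L_coloring V E L f))"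

definition ch :: "'v set \<Rightarrow> ('v \<Rightarrow> 'v \<Rightarrow> bool) \<Rightarrow> nat" where
  "ch V E = (LEAST k. choosable V E k)"

definition cmp_edge :: "'v set set \<Rightarrow> 'v \<Rightarrow> 'v \<Rightarrow> bool" where
  "cmp_edge P u v \<longleftrightarrow> (\<exists>A\<in>P. \<exists>B\<in>P. A \<noteq> B \<and> u \<in> A \<and> v \<in> B)"

definition num_parts :: "'v set set \<Rightarrow> nat \<Rightarrow> nat" where
  "num_parts P i = card {A \<in> P. card A = i}"

definition good_pair :: "'v set set \<Rightarrow> ('v \<Rightarrow> 'c set) \<Rightarrow> 'v set \<Rightarrow> 'v \<Rightarrow> 'v \<Rightarrow> bool" where
  "good_pair P L A u v \<longleftrightarrow> u \<in> A \<and> v \<in> A \<and> u \<noteq> v \<and>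
     ((card A = 3 \<and> real (card (L u \<inter> L v)) \<ge> (real (num_parts P 1) + real (num_parts P 4) + 1) / 3)
      \<or> (card A = 4 \<and> (\<exists>w z. A - {u, v} = {w, z} \<and> card (L u \<inter> L v) \<ge> card (L w \<inter> L z))))"

end

theory Submission
  imports Defs
begin

text \<open>If some colour \<open>c\<close> lay in the lists of all three vertices of \<open>A\<close>, one could colour \<open>A\<close>
  with \<open>c\<close> and colour the rest of \<open>G\<close>, a complete \<open>(k - 1)\<close>-partite graph on fewer vertices,
  from the lists with \<open>c\<close> removed, using the minimality hypothesis. Hence the three pairwise
  intersections of the lists on \<open>A\<close> are disjoint, and inclusion-exclusion together with
  \<open>|\<Union>L| \<le> n - 1\<close> and \<open>|L(v)| \<ge> (n + k - 1) / 3\<close> shows that their sizes add up to at least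
  \<open>k \<ge> k\<^sub>1 + k\<^sub>3 + k\<^sub>4\<close>. A pair that is not good contributes at most \<open>(k\<^sub>1 + k\<^sub>4) / 3\<close>
  colours; not all three pairs can be bad, as their total would then be at most \<open>k\<^sub>1 + k\<^sub>4 < k\<close>,
  so dropping the bad pairs costs at most \<open>2 (k\<^sub>1 + k\<^sub>4) / 3\<close>.\<close>

lemma L_coloring_greedy:
  fixes L :: "'v \<Rightarrow> 'c set"
  assumes "finite V" and "\<And>v. \<not> E v v"
    and "\<forall>v\<in>V. finite (L v) \<and> card V \<le> card (L v)"
  shows "\<exists>f. L_coloring V E L f"
  using assms(1,3)
proof (induction V rule: finite_induct)
  case empty
  then show ?case by (simp add: L_coloring_def proper_coloring_def)
next
  case (insert x V)
  then obtain f where f: "L_coloring V E L f" by fastforce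
  have "card (f ` V) < card (L x)"
    using insert card_image_le[of V f] by auto
  then have "\<not> L x \<subseteq> f ` V"
    using insert card_mono[of "f ` V" "L x"] by auto
  then obtain c where c: "c \<in> L x" "c \<notin> f ` V" by blast
  have "L_coloring (insert x V) E L (f(x := c))"
    using f c assms(2) \<open>x \<notin> V\<close>
    unfolding L_coloring_def proper_coloring_def by (metis fun_upd_apply image_eqI insert_iff)
  then show ?case by blast
qed

lemma choosable_card:
  assumes "finite V" and "\<And>v. \<not> E v v"
  shows "choosable V E (card V)"
  using L_coloring_greedy[of V E] assms unfolding choosable_def by blast

lemma choosable_ch:
  assumes "finite V" and "\<And>v. \<not> E v v"
  shows "choosable V E (ch V E)"
  unfolding ch_def using choosable_card[OF assms] by (rule LeastI)

lemma choosable_mono: "choosable V E s \<Longrightarrow> s \<le> t \<Longrightarrow> choosable V E t"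
  unfolding choosable_def by (meson order_trans)

lemma L_coloring_of_choosable:
  fixes L :: "'v \<Rightarrow> 'c set"
  assumes "finite V" and "choosable V E s"
    and "\<forall>v\<in>V. finite (L v) \<and> s \<le> card (L v)"
  shows "\<exists>f. L_coloring V E L f"
proof -
  define C where "C = (\<Union>v\<in>V. L v)"
  have "finite C" using assms(1,3) unfolding C_def by auto
  then obtain g :: "'c \<Rightarrow> nat" where g: "inj_on g C"
    using finite_imp_inj_to_nat_seg by metis
  have LC: "L v \<subseteq> C" if "v \<in> V" for v using that unfolding C_def by blast
  have "card (g ` L v) = card (L v)" if "v \<in> V" for v
    using card_image inj_on_subset[OF g LC[OF that]] by blast
  then have "\<forall>v\<in>V. finite (g ` L v) \<and> s \<le> card (g ` L v)"
    using assms(3) by simp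
  then obtain f where f: "L_coloring V E (\<lambda>v. g ` L v) f"
    using assms(2) unfolding choosable_def by (elim allE[of _ "\<lambda>v. g ` L v"]) blast
  have fv: "f v \<in> g ` L v" if "v \<in> V" for v
    using f that unfolding L_coloring_def by blast
  have "the_inv_into C g (f v) \<in> L v" if "v \<in> V" for v
    using fv[OF that] the_inv_into_f_f[OF g] LC[OF that] by auto
  moreover have "the_inv_into C g (f u) \<noteq> the_inv_into C g (f v)"
    if "u \<in> V" "v \<in> V" "E u v" for u v
  proof
    assume "the_inv_into C g (f u) = the_inv_into C g (f v)"
    then have "f u = f v"
      using fv that LC f_the_inv_into_f[OF g] by (metis image_mono subsetD)
    with f that show False unfolding L_coloring_def proper_coloring_def by blast
  qed
  ultimately have "L_coloring V E L (\<lambda>v. the_inv_into C g (f v))"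
    unfolding L_coloring_def proper_coloring_def by blast
  then show ?thesis by blast
qed

lemma choosable_inj_image:
  assumes "inj_on h V" and "\<And>u v. u \<in> V \<Longrightarrow> v \<in> V \<Longrightarrow> E u v \<Longrightarrow> F (h u) (h v)"
    and "choosable (h ` V) F s"
  shows "choosable V E s"
  unfolding choosable_def
proof (intro allI impI)
  fix L :: "'a \<Rightarrow> nat set"
  assume L: "\<forall>v\<in>V. finite (L v) \<and> s \<le> card (L v)"
  have inv: "the_inv_into V h (h v) = v" if "v \<in> V" for v
    using the_inv_into_f_f[OF assms(1) that] .
  have "\<forall>a\<in>h ` V. finite (L (the_inv_into V h a)) \<and> s \<le> card (L (the_inv_into V h a))"
    using L inv by auto
  then obtain f where f: "L_coloring (h ` V) F (L \<circ> the_inv_into V h) f"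
    using assms(3) unfolding choosable_def by (elim allE[of _ "L \<circ> the_inv_into V h"]) auto
  have "L_coloring V E L (f \<circ> h)"
    using f assms(2) inv unfolding L_coloring_def proper_coloring_def by auto
  then show "\<exists>f. L_coloring V E L f" by blast
qed

lemma partition_on_part_unique:
  "partition_on V P \<Longrightarrow> A \<in> P \<Longrightarrow> B \<in> P \<Longrightarrow> u \<in> A \<Longrightarrow> u \<in> B \<Longrightarrow> A = B"
  using partition_onD2 disjointD by blast

lemma not_cmp_edge_same_part:
  "partition_on V P \<Longrightarrow> A \<in> P \<Longrightarrow> u \<in> A \<Longrightarrow> v \<in> A \<Longrightarrow> \<not> cmp_edge P u v"
  unfolding cmp_edge_def using partition_on_part_unique by metis

lemma cmp_edge_irrefl: "partition_on V P \<Longrightarrow> \<not> cmp_edge P u u"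
  using not_cmp_edge_same_part unfolding cmp_edge_def by metis

lemma graph_cmp_edge: "finite V \<Longrightarrow> partition_on V P \<Longrightarrow> graph V (cmp_edge P)"
proof -
  assume V: "finite V" and P: "partition_on V P"
  have "u \<in> V \<and> v \<in> V \<and> cmp_edge P v u" if "cmp_edge P u v" for u v
    using that partition_onD1[OF P] unfolding cmp_edge_def by blast
  with V cmp_edge_irrefl[OF P] show ?thesis
    unfolding graph_def by metis
qed

lemma chi_cmp_edge_le:
  assumes "finite P" and "partition_on V P"
  shows "chi V (cmp_edge P) \<le> card P"
proof -
  obtain q :: "'a set \<Rightarrow> nat" and N where q: "q ` P = {i. i < N}" "inj_on q P"
    using finite_imp_inj_to_nat_seg[OF assms(1)] by blast
  have "N = card P"
    using card_image[OF q(2)] q(1) by simp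
  define part_of where "part_of u = (SOME A. A \<in> P \<and> u \<in> A)" for u
  have part_of: "part_of u = A" if "A \<in> P" "u \<in> A" for u A
    unfolding part_of_def
  proof (rule some_equality)
    show "A \<in> P \<and> u \<in> A" using that ..
  qed (use that partition_on_part_unique[OF assms(2)] in blast)
  have "q (part_of u) \<noteq> q (part_of v)" if uv: "cmp_edge P u v" for u v
  proof -
    obtain A B where "A \<in> P" "B \<in> P" "A \<noteq> B" "u \<in> A" "v \<in> B"
      using uv unfolding cmp_edge_def by blast
    then show ?thesis
      using part_of inj_on_contraD[OF q(2)] by metis
  qed
  then have "proper_coloring V (cmp_edge P) (q \<circ> part_of)"
    unfolding proper_coloring_def by simp
  moreover have "(q \<circ> part_of) ` V \<subseteq> {..<card P}"
  proof
    fix i assume "i \<in> (q \<circ> part_of) ` V"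
    then obtain u A where "A \<in> P" "u \<in> A" "i = q (part_of u)"
      using partition_onD1[OF assms(2)] by auto
    then show "i \<in> {..<card P}"
      using part_of q(1) \<open>N = card P\<close> by blast
  qed
  ultimately show ?thesis
    unfolding chi_def by (blast intro: Least_le)
qed

lemma cmp_edge_inj_image:
  assumes "partition_on V P" and "inj_on h V" and "cmp_edge P u v"
  shows "cmp_edge ((`) h ` P - {{}}) (h u) (h v)"
proof -
  obtain A B where AB: "A \<in> P" "B \<in> P" "A \<noteq> B" "u \<in> A" "v \<in> B"
    using assms(3) unfolding cmp_edge_def by blast
  have "h u \<notin> h ` B"
  proof
    assume "h u \<in> h ` B"
    then obtain w where "w \<in> B" "h u = h w" by blast
    moreover have "u \<in> V" "w \<in> V"
      using AB \<open>w \<in> B\<close> partition_onD1[OF assms(1)] by blast+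
    ultimately have "u \<in> B" using inj_onD[OF assms(2)] by metis
    then show False using AB partition_on_part_unique[OF assms(1)] by blast
  qed
  then show ?thesis
    using AB unfolding cmp_edge_def by blast
qed

lemma L_coloring_extend_by_part:
  assumes "partition_on V P" and "A \<in> P" and "\<forall>v\<in>A. c \<in> L v"
    and "L_coloring (V - A) (cmp_edge (P - {A})) (\<lambda>v. L v - {c}) f"
  shows "\<exists>g. L_coloring V (cmp_edge P) L g"
proof -
  define g where "g v = (if v \<in> A then c else f v)" for v
  have fV: "f v \<in> L v - {c}" if "v \<in> V - A" for v
    using assms(4) that unfolding L_coloring_def by blast
  have "g u \<noteq> g v" if "u \<in> V" "v \<in> V" "cmp_edge P u v" for u v
  proof (cases "u \<in> A \<or> v \<in> A")
    case True
    then have "\<not> (u \<in> A \<and> v \<in> A)"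
      using not_cmp_edge_same_part[OF assms(1,2)] that(3) by blast
    then show ?thesis using True fV that unfolding g_def by auto
  next
    case False
    then have "cmp_edge (P - {A}) u v"
      using that(3) unfolding cmp_edge_def by blast
    then show ?thesis
      using assms(4) False that unfolding g_def L_coloring_def proper_coloring_def by auto
  qed
  moreover have "g v \<in> L v" if "v \<in> V" for v
    using assms(3) fV that unfolding g_def by auto
  ultimately show ?thesis
    unfolding L_coloring_def proper_coloring_def by blast
qed

lemma max_ceiling_third_less:
  fixes w x n k :: nat
  assumes "w + 2 \<le> n" and "x + 1 \<le> k" and "2 * k \<le> n + 1"
  shows "max x (nat \<lceil>(real w + real x - 1) / 3\<rceil>) < nat \<lceil>(real n + real k - 1) / 3\<rceil>"
proof -
  have "3 * x + 1 < n + k"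
    using assms(2,3) by linarith
  then have "real x < (real n + real k - 1) / 3"
    by (simp add: field_simps flip: of_nat_add of_nat_mult)
  then have "int x < \<lceil>(real n + real k - 1) / 3\<rceil>"
    by (simp add: less_ceiling_iff)
  moreover have "\<lceil>(real w + real x - 1) / 3\<rceil> \<le> \<lceil>(real n + real k - 1) / 3 - 1\<rceil>"
  proof (rule ceiling_mono)
    have "w + x + 3 \<le> n + k" using assms(1,2) by linarith
    then have "real w + real x + 3 \<le> real n + real k"
      by (metis of_nat_add of_nat_le_iff of_nat_numeral)
    then show "(real w + real x - 1) / 3 \<le> (real n + real k - 1) / 3 - 1"
      by (simp add: field_simps)
  qed
  ultimately show ?thesis by (simp add: zless_nat_conj zless_nat_eq_int_zless)
qed

lemma nat_ge_of_ceiling_third: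
  "\<lceil>(real n + real k - 1) / 3\<rceil> \<le> int c \<Longrightarrow> n + k \<le> 3 * c + 1"
proof -
  assume "\<lceil>(real n + real k - 1) / 3\<rceil> \<le> int c"
  then have "real (n + k) \<le> real (3 * c + 1)" by (simp add: ceiling_le_iff)
  then show ?thesis by (simp only: of_nat_le_iff)
qed

lemma partition_on_Diff_part:
  assumes "partition_on V P" and "A \<in> P"
  shows "partition_on (V - A) (P - {A})"
proof -
  have "disjnt A (\<Union>(P - {A}))"
    using assms partition_on_part_unique by (fastforce simp: disjnt_def)
  moreover have "insert A (P - {A}) = P" using assms(2) by blast
  ultimately show ?thesis
    using partition_on_insert[of A "P - {A}" V] assms(1) by simp
qed

lemma choosable_Diff_part:
  assumes "finite V" and "card V = n" and "partition_on V P" and "card P = k"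
    and "2 * k \<le> n + 1"
    and minimal: "\<forall>(W :: nat set) F. graph W F \<and> card W < n \<longrightarrow>
           ch W F \<le> max (chi W F) (nat \<lceil>(real (card W) + real (chi W F) - 1) / 3\<rceil>)"
    and "A \<in> P" and "2 \<le> card A"
  shows "choosable (V - A) (cmp_edge (P - {A})) (nat \<lceil>(real n + real k - 1) / 3\<rceil> - 1)"
proof -
  have AV: "A \<subseteq> V" using assms(3,7) partition_onD1 by blast
  have P': "partition_on (V - A) (P - {A})"
    using partition_on_Diff_part[OF assms(3,7)] .
  obtain h :: "'a \<Rightarrow> nat" where "inj_on h V"
    using finite_imp_inj_to_nat_seg[OF assms(1)] by blast
  then have h: "inj_on h (V - A)" by (rule inj_on_subset) blast
  define W where "W = h ` (V - A)"
  define Q where "Q = (`) h ` (P - {A}) - {{}}"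
  have Q: "partition_on W Q"
    unfolding W_def Q_def using partition_on_inj_image[OF P' h] .
  have "card W = n - card A"
    unfolding W_def using card_image[OF h] card_Diff_subset[OF finite_subset[OF AV assms(1)] AV]
      assms(2) by simp
  moreover have "card A \<le> n" using card_mono[OF assms(1) AV] assms(2) by simp
  ultimately have card_W: "card W + 2 \<le> n" using assms(8) by linarith
  have "finite P" using finite_elements[OF assms(1,3)] .
  then have "finite Q" unfolding Q_def by simp
  have "chi W (cmp_edge Q) \<le> card Q"
    using chi_cmp_edge_le[OF \<open>finite Q\<close> Q] .
  also have "\<dots> \<le> card (P - {A})"
    unfolding Q_def using \<open>finite P\<close>
    by (intro order_trans[OF card_Diff1_le card_image_le]) simp
  also have "\<dots> = k - 1" using assms(4,7) \<open>finite P\<close> by simp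
  finally have chi_W: "chi W (cmp_edge Q) + 1 \<le> k"
    using card_gt_0_iff[of P] assms(4,7) \<open>finite P\<close> by auto
  have "finite W" unfolding W_def using assms(1) by simp
  then have "ch W (cmp_edge Q) \<le> max (chi W (cmp_edge Q))
      (nat \<lceil>(real (card W) + real (chi W (cmp_edge Q)) - 1) / 3\<rceil>)"
    using card_W by (intro minimal[rule_format] conjI graph_cmp_edge[OF _ Q]) simp_all
  also have "\<dots> < nat \<lceil>(real n + real k - 1) / 3\<rceil>"
    using max_ceiling_third_less[OF card_W chi_W assms(5)] .
  finally have "choosable W (cmp_edge Q) (nat \<lceil>(real n + real k - 1) / 3\<rceil> - 1)"
    using choosable_mono[OF choosable_ch[OF \<open>finite W\<close>]] cmp_edge_irrefl[OF Q] by simp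
  then show ?thesis
    using choosable_inj_image[OF h, of "cmp_edge (P - {A})" "cmp_edge Q"] cmp_edge_inj_image[OF P' h]
    unfolding W_def Q_def by blast
qed

lemma no_colour_common_to_part:
  fixes V :: "'v set" and P :: "'v set set" and L :: "'v \<Rightarrow> 'c set"
  assumes "finite V" and "card V = n" and "partition_on V P" and "card P = k"
    and "2 * k \<le> n + 1"
    and sizes: "\<forall>v\<in>V. finite (L v) \<and> int (card (L v)) \<ge> \<lceil>(real n + real k - 1) / 3\<rceil>"
    and "\<not> (\<exists>f. L_coloring V (cmp_edge P) L f)"
    and "\<forall>(W :: nat set) F. graph W F \<and> card W < n \<longrightarrow>
           ch W F \<le> max (chi W F) (nat \<lceil>(real (card W) + real (chi W F) - 1) / 3\<rceil>)"
    and "A \<in> P" and "2 \<le> card A"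
  shows "(\<Inter>v\<in>A. L v) = {}"
proof (rule ccontr)
  assume "(\<Inter>v\<in>A. L v) \<noteq> {}"
  then obtain c where c: "\<forall>v\<in>A. c \<in> L v" by blast
  define s where "s = nat \<lceil>(real n + real k - 1) / 3\<rceil>"
  have lists: "\<forall>v\<in>V - A. finite (L v - {c}) \<and> s - 1 \<le> card (L v - {c})"
  proof
    fix v assume "v \<in> V - A"
    then have "finite (L v)" "s \<le> card (L v)"
      using sizes unfolding s_def by (auto simp: nat_le_iff)
    then show "finite (L v - {c}) \<and> s - 1 \<le> card (L v - {c})"
      by (cases "c \<in> L v") (simp_all add: card_Diff_singleton_if)
  qed
  have "choosable (V - A) (cmp_edge (P - {A})) (s - 1)"
    unfolding s_def by (rule choosable_Diff_part[OF assms(1-5,8-10)])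
  then have "\<exists>f. L_coloring (V - A) (cmp_edge (P - {A})) (\<lambda>v. L v - {c}) f"
    using finite_Diff[OF assms(1)] lists by (intro L_coloring_of_choosable)
  then show False
    using L_coloring_extend_by_part[OF assms(3,9) c] assms(7) by metis
qed

lemma card_Un3_Int_no_common:
  assumes "finite X" "finite Y" "finite Z" and "X \<inter> Y \<inter> Z = {}"
  shows "card X + card Y + card Z
    = card (X \<union> Y \<union> Z) + card (X \<inter> Y) + card (X \<inter> Z) + card (Y \<inter> Z)"
proof -
  have "(X \<union> Y) \<inter> Z = (X \<inter> Z) \<union> (Y \<inter> Z)" by blast
  moreover have "(X \<inter> Z) \<inter> (Y \<inter> Z) = {}" using assms(4) by blast
  ultimately have "card ((X \<union> Y) \<inter> Z) = card (X \<inter> Z) + card (Y \<inter> Z)"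
    using assms(1-3) card_Un_disjoint by (metis finite_Int)
  then show ?thesis
    using card_Un_Int[OF assms(1,2)] card_Un_Int[of "X \<union> Y" Z] assms(1-3) by simp
qed

lemma sum_card_pairwise_Int_ge:
  fixes X Y Z :: "'c set"
  assumes "finite X" "finite Y" "finite Z" and "X \<inter> Y \<inter> Z = {}"
    and "n + k \<le> 3 * card X + 1" "n + k \<le> 3 * card Y + 1" "n + k \<le> 3 * card Z + 1"
    and "card (X \<union> Y \<union> Z) + 1 \<le> n"
  shows "k \<le> card (X \<inter> Y) + card (X \<inter> Z) + card (Y \<inter> Z)"
  using card_Un3_Int_no_common[OF assms(1-4)] assms(5-8) by linarith

lemma card_Un3_disjoint:
  assumes "finite X" "finite Y" "finite Z"
    and "X \<inter> Y = {}" "X \<inter> Z = {}" "Y \<inter> Z = {}"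
  shows "card (X \<union> Y \<union> Z) = card X + card Y + card Z"
  using assms by (simp add: card_Un_disjoint Int_Un_distrib2)

lemma sum_num_parts_le_card:
  assumes "finite P"
  shows "(\<Sum>i\<in>I. num_parts P i) \<le> card P"
proof (cases "finite I")
  case True
  have "(\<Sum>i\<in>I. num_parts P i) = card (\<Union>i\<in>I. {A \<in> P. card A = i})"
    unfolding num_parts_def using True assms by (subst card_UN_disjoint) auto
  also have "\<dots> \<le> card P" using assms by (intro card_mono) auto
  finally show ?thesis .
qed simp

lemma num_parts_card_pos: "finite P \<Longrightarrow> A \<in> P \<Longrightarrow> 0 < num_parts P (card A)"
  unfolding num_parts_def by (subst card_gt_0_iff) auto

definition large_or_empty :: "nat \<Rightarrow> 'c set \<Rightarrow> 'c set" where
  "large_or_empty m X = (if m < 3 * card X then X else {})"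

lemma large_or_empty_subset: "large_or_empty m X \<subseteq> X"
  unfolding large_or_empty_def by simp

lemma card_large_or_empty:
  "card (large_or_empty m X) = (if m < 3 * card X then card X else 0)"
  unfolding large_or_empty_def by simp

lemma good_pair_card3_iff:
  assumes "card A = 3"
  shows "good_pair P L A u v \<longleftrightarrow> u \<in> A \<and> v \<in> A \<and> u \<noteq> v \<and>
    num_parts P 1 + num_parts P 4 < 3 * card (L u \<inter> L v)"
proof -
  have "(real (num_parts P 1) + real (num_parts P 4) + 1) / 3 \<le> real (card (L u \<inter> L v))
      \<longleftrightarrow> real (num_parts P 1 + num_parts P 4 + 1) \<le> real (3 * card (L u \<inter> L v))"
    by (simp add: field_simps)
  then show ?thesis
    using assms unfolding good_pair_def of_nat_le_iff by auto
qed

lemma good_pair_colours_triangle: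
  fixes P :: "'v set set" and L :: "'v \<Rightarrow> 'c set"
  assumes "A = {x, y, z}" and "x \<noteq> y" "y \<noteq> z" "x \<noteq> z"
  defines "m \<equiv> num_parts P 1 + num_parts P 4"
  shows "{c. \<exists>u v. good_pair P L A u v \<and> c \<in> L u \<inter> L v}
    = large_or_empty m (L x \<inter> L y) \<union> large_or_empty m (L x \<inter> L z)
      \<union> large_or_empty m (L y \<inter> L z)"
proof -
  have "card A = 3" using assms(1-4) by simp
  note good = good_pair_card3_iff[OF this]
  have "large_or_empty m (L u \<inter> L v) \<subseteq> {c. \<exists>u v. good_pair P L A u v \<and> c \<in> L u \<inter> L v}"
    if "u \<in> A" "v \<in> A" "u \<noteq> v" for u v
    using that unfolding good large_or_empty_def m_def by auto
  moreover have "c \<in> large_or_empty m (L x \<inter> L y) \<union> large_or_empty m (L x \<inter> L z)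
      \<union> large_or_empty m (L y \<inter> L z)" if "good_pair P L A u v" "c \<in> L u \<inter> L v" for c u v
  proof -
    have "m < 3 * card (L u \<inter> L v)" "u \<in> A" "v \<in> A" "u \<noteq> v"
      using that(1) unfolding good m_def by auto
    then consider "{u, v} = {x, y}" | "{u, v} = {x, z}" | "{u, v} = {y, z}"
      using assms(1) by blast
    then show ?thesis
      using that(2) \<open>m < 3 * card (L u \<inter> L v)\<close> unfolding large_or_empty_def
      by cases (auto simp: doubleton_eq_iff Int_commute)
  qed
  ultimately show ?thesis
    using assms(1-4) by blast
qed

lemma card_large_or_empty_pairwise_Int:
  fixes X Y Z :: "'c set"
  assumes "finite X" "finite Y" "finite Z" and "X \<inter> Y \<inter> Z = {}"
  shows "card (large_or_empty m (X \<inter> Y) \<union> large_or_empty m (X \<inter> Z) \<union> large_or_empty m (Y \<inter> Z))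
    = (if m < 3 * card (X \<inter> Y) then card (X \<inter> Y) else 0)
      + (if m < 3 * card (X \<inter> Z) then card (X \<inter> Z) else 0)
      + (if m < 3 * card (Y \<inter> Z) then card (Y \<inter> Z) else 0)"
proof -
  have "card (large_or_empty m (X \<inter> Y) \<union> large_or_empty m (X \<inter> Z) \<union> large_or_empty m (Y \<inter> Z))
    = card (large_or_empty m (X \<inter> Y)) + card (large_or_empty m (X \<inter> Z))
      + card (large_or_empty m (Y \<inter> Z))"
    using large_or_empty_subset[of m] assms
    by (intro card_Un3_disjoint) (blast intro: finite_subset)+
  then show ?thesis by (simp only: card_large_or_empty)
qed

lemma sum_large_terms_bound:
  fixes a b c k k3 m :: nat
  assumes "k \<le> a + b + c" and "k3 + m \<le> k" and "1 \<le> k3"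
  shows "3 * k3 + m \<le>
    3 * ((if m < 3 * a then a else 0) + (if m < 3 * b then b else 0) + (if m < 3 * c then c else 0))"
  using assms by (auto split: if_splits)

theorem lemma30:
  fixes V :: "'v set" and P :: "'v set set" and L :: "'v \<Rightarrow> 'c set"
    and k n :: nat and A :: "'v set"
  assumes "k \<ge> 1" and "n \<ge> 2 * k + 2"
    and "finite V" and "card V = n"
    and "partition_on V P" and "card P = k"
    and "\<forall>v\<in>V. finite (L v) \<and> int (card (L v)) \<ge> \<lceil>(real n + real k - 1) / 3\<rceil>"
    and "\<not> (\<exists>f. L_coloring V (cmp_edge P) L f)"
    and "card (\<Union>v\<in>V. L v) \<le> n - 1"
    and "\<forall>(W :: nat set) F. graph W F \<and> card W < n \<longrightarrow>
           ch W F \<le> max (chi W F) (nat \<lceil>(real (card W) + real (chi W F) - 1) / 3\<rceil>)"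
    and "A \<in> P" and "card A = 3"
  shows "real (card {c. \<exists>u v. good_pair P L A u v \<and> c \<in> L u \<inter> L v})
           \<ge> real (num_parts P 3) + (real (num_parts P 1) + real (num_parts P 4)) / 3"
proof -
  obtain x y z where A: "A = {x, y, z}" "x \<noteq> y" "y \<noteq> z" "x \<noteq> z"
    using assms(12) card_3_iff by metis
  have xyz: "x \<in> V" "y \<in> V" "z \<in> V"
    using A assms(5,11) partition_onD1 by blast+
  note fin = xyz[THEN assms(7)[rule_format], THEN conjunct1]
  note list_size = xyz[THEN assms(7)[rule_format], THEN conjunct2, THEN nat_ge_of_ceiling_third]
  have "(\<Inter>v\<in>A. L v) = {}"
    using no_colour_common_to_part[OF assms(3,4,5,6) _ assms(7,8,10,11)] assms(2,12) by simp
  then have no_common: "L x \<inter> L y \<inter> L z = {}" using A(1) by auto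
  have "card (L x \<union> L y \<union> L z) \<le> card (\<Union>v\<in>V. L v)"
    using xyz assms(3,7) by (intro card_mono) auto
  then have overlaps: "k \<le> card (L x \<inter> L y) + card (L x \<inter> L z) + card (L y \<inter> L z)"
    using sum_card_pairwise_Int_ge[OF fin no_common list_size] assms(2,9) by linarith
  define m where "m = num_parts P 1 + num_parts P 4"
  have "finite P" using finite_elements[OF assms(3,5)] .
  then have parts: "num_parts P 3 + m \<le> k" "1 \<le> num_parts P 3"
    using sum_num_parts_le_card[of P "{1, 3, 4}"] num_parts_card_pos[of P A] assms(6,11,12)
    unfolding m_def by simp_all
  have "real (3 * num_parts P 3 + m) \<le> real (3 * card (large_or_empty m (L x \<inter> L y)
      \<union> large_or_empty m (L x \<inter> L z) \<union> large_or_empty m (L y \<inter> L z)))"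
    unfolding card_large_or_empty_pairwise_Int[OF fin no_common] of_nat_le_iff
    using sum_large_terms_bound[OF overlaps parts] .
  then show ?thesis
    unfolding good_pair_colours_triangle[OF A] m_def by (simp add: field_simps)
qed

end
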